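(* Let $a>0$ and let $f:[0,\infty)\to[0,\infty)$ be defined by $f(x)=7x$ for $0\le x\le a$, $f(x)=8a-x$ for $a\le x\le 8a$, and $f(x)=0$ for $x\ge 8a$. Consider the problem of choosing a (possibly infinite) subset $U\subseteq(0,8a)$ maximizing $\sum_{x\in U}f(x)$ subject to the constraint that for all $x,y\in U$, $x<y$ implies $2x\le y$. Then the supremum (optimal value) of this problem is exactly $24a$ (and it is attained, e.g. by $U=\{4a/2^i : i\in\mathbb{N}\cup\{0\}\}$). *)

theory Defs
  imports "HOL-Analysis.Analysis"
begin

text \<open>The piecewise-linear function f on [0,\<infinity>) with parameter a.
  (Its values for x < 0 are irrelevant since admissible sets lie in (0,8a).)\<close>
definition f_tent :: "real \<Rightarrow> real \<Rightarrow> real" where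
  "f_tent a x = (if x \<le> a then 7 * x else if x \<le> 8 * a then 8 * a - x else 0)"

definition admissible :: "real \<Rightarrow> real set \<Rightarrow> bool" where
  "admissible a U \<longleftrightarrow> U \<subseteq> {0<..<8 * a} \<and> (\<forall>x\<in>U. \<forall>y\<in>U. x < y \<longrightarrow> 2 * x \<le> y)"

text \<open>Objective: the (possibly infinite) sum of f over U, taken in ennreal so that
  every family of nonnegative terms has a well-defined sum (possibly \<infinity>).\<close>
definition objective :: "real \<Rightarrow> real set \<Rightarrow> ennreal" where
  "objective a U = (\<Sum>\<^sub>\<infinity>x\<in>U. ennreal (f_tent a x))"

end

theory Submission
  imports Defs
begin

text \<open>Upper bound by a potential: if \<open>\<Phi>(t)\<close> dominates the f-sums over admissible finite
  subsets of \<open>(0,t]\<close>, then removing the largest element m leaves a subset of \<open>(0,m/2]\<close>,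
  so it suffices that \<open>f(m) + \<Phi>(m/2) \<le> \<Phi>(m)\<close>. For the tent function the optimal
  halving chains give such a \<open>\<Phi>\<close> with \<open>\<Phi>(8a) = 24a\<close>. The bound is attained by the chain
  \<open>4a, 2a, a, a/2, \<dots>\<close>, worth \<open>4a + 6a + 7a (1 + 1/2 + \<dots>) = 24a\<close>.\<close>

lemma sum_le_potential_if_doubling:
  fixes g \<Phi> :: "real \<Rightarrow> real"
  assumes step: "\<And>m. 0 < m \<Longrightarrow> g m + \<Phi> (m / 2) \<le> \<Phi> m"
    and mono: "\<And>s t. 0 < s \<Longrightarrow> s \<le> t \<Longrightarrow> \<Phi> s \<le> \<Phi> t"
    and nonneg: "\<And>t. 0 \<le> t \<Longrightarrow> 0 \<le> \<Phi> t"
    and "finite F" "F \<subseteq> {0<..t}" "0 \<le> t"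
    and doubling: "\<And>x y. x \<in> F \<Longrightarrow> y \<in> F \<Longrightarrow> x < y \<Longrightarrow> 2 * x \<le> y"
  shows "sum g F \<le> \<Phi> t"
  using assms(4-7)
proof (induction F arbitrary: t rule: finite_psubset_induct)
  case (psubset F)
  show ?case
  proof (cases "F = {}")
    case True
    then show ?thesis using nonneg psubset.prems(2) by simp
  next
    case False
    define m where "m = Max F"
    have "m \<in> F" using False psubset.hyps by (simp add: m_def)
    then have m: "m \<in> F" "0 < m" "m \<le> t" using psubset.prems(1) by auto
    have below: "F - {m} \<subseteq> {0<..m / 2}"
    proof
      fix x assume x: "x \<in> F - {m}"
      then have "x < m" using psubset.hyps by (auto simp: m_def less_le)
      then show "x \<in> {0<..m / 2}" using x psubset.prems(1) psubset.prems(3)[of x m] m by auto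
    qed
    have "sum g F = g m + sum g (F - {m})"
      using m psubset.hyps by (simp add: sum.remove)
    also have "\<dots> \<le> g m + \<Phi> (m / 2)"
      using m below psubset.prems(3) by (intro add_left_mono psubset.IH) auto
    also have "\<dots> \<le> \<Phi> t"
      using step[of m] mono[of m t] m by linarith
    finally show ?thesis .
  qed
qed

lemma infsum_ennreal_eq_if_sums:
  fixes g :: "nat \<Rightarrow> real"
  assumes "g sums s" "\<And>n. 0 \<le> g n"
  shows "(\<Sum>\<^sub>\<infinity>n. ennreal (g n)) = ennreal s"
proof -
  have "(g has_sum s) UNIV" using assms by (rule sums_nonneg_imp_has_sum)
  then have "ennreal s = (SUP F\<in>{F. finite F}. ennreal (sum g F))"
    using infsum_nonneg_is_SUPREMUM_ennreal[of g UNIV] assms(2) by (auto simp: summable_on_def infsumI)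
  also have "\<dots> = (SUP F\<in>{F. finite F}. (\<Sum>n\<in>F. ennreal (g n)))"
    using assms(2) by (simp add: sum_ennreal)
  also have "\<dots> = (\<Sum>\<^sub>\<infinity>n. ennreal (g n))"
    using nonneg_infsum_complete[of UNIV "\<lambda>n. ennreal (g n)"] by simp
  finally show ?thesis by simp
qed

text \<open>The value of the halving chain \<open>t, t/2, t/4, \<dots>\<close> for \<open>t \<le> 4a\<close>, capped at \<open>24a\<close>.\<close>
definition tent_potential :: "real \<Rightarrow> real \<Rightarrow> real" where
  "tent_potential a t =
     (if t \<le> a then 14 * t else if t \<le> 2 * a then 8 * a + 6 * t
      else if t \<le> 4 * a then 16 * a + 2 * t else 24 * a)"

lemma tent_potential_step:
  "0 < a \<Longrightarrow> 0 < m \<Longrightarrow> f_tent a m + tent_potential a (m / 2) \<le> tent_potential a m"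
  unfolding tent_potential_def f_tent_def by (auto split: if_splits)

lemma tent_potential_mono: "0 < a \<Longrightarrow> s \<le> t \<Longrightarrow> tent_potential a s \<le> tent_potential a t"
  unfolding tent_potential_def by (auto split: if_splits)

lemma tent_potential_nonneg: "0 < a \<Longrightarrow> 0 \<le> t \<Longrightarrow> 0 \<le> tent_potential a t"
  unfolding tent_potential_def by (auto split: if_splits)

lemma tent_potential_le: "0 < a \<Longrightarrow> tent_potential a t \<le> 24 * a"
  unfolding tent_potential_def by (auto split: if_splits)

lemma f_tent_nonneg: "0 < a \<Longrightarrow> 0 < x \<Longrightarrow> 0 \<le> f_tent a x"
  unfolding f_tent_def by auto

lemma objective_le_if_admissible:
  assumes "0 < a" "admissible a U"
  shows "objective a U \<le> ennreal (24 * a)"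
  unfolding objective_def
proof (rule infsum_le_finite_sums)
  show "(\<lambda>x. ennreal (f_tent a x)) summable_on U"
    by (rule nonneg_summable_on_complete) simp
next
  fix F assume F: "finite F" "F \<subseteq> U"
  then have F_in: "F \<subseteq> {0<..8 * a}" "\<And>x y. x \<in> F \<Longrightarrow> y \<in> F \<Longrightarrow> x < y \<Longrightarrow> 2 * x \<le> y"
    using assms(2) by (auto simp: admissible_def)
  have "sum (f_tent a) F \<le> tent_potential a (8 * a)"
    using assms(1) F(1) F_in
    by (intro sum_le_potential_if_doubling tent_potential_step tent_potential_mono
        tent_potential_nonneg) auto
  also have "\<dots> \<le> 24 * a" using assms(1) by (rule tent_potential_le)
  finally have "ennreal (sum (f_tent a) F) \<le> ennreal (24 * a)" by (rule ennreal_leI)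
  then show "(\<Sum>x\<in>F. ennreal (f_tent a x)) \<le> ennreal (24 * a)"
    using F_in(1) assms(1) f_tent_nonneg by (subst sum_ennreal) (auto simp: subset_iff)
qed

lemma admissible_halving_orbit:
  assumes "a > 0"
  shows "admissible a (range (\<lambda>i::nat. 4 * a / 2 ^ i))"
  unfolding admissible_def
proof (intro conjI ballI impI)
  show "range (\<lambda>i::nat. 4 * a / 2 ^ i) \<subseteq> {0<..<8 * a}"
  proof
    fix x assume "x \<in> range (\<lambda>i::nat. 4 * a / 2 ^ i)"
    then obtain i :: nat where x: "x = 4 * a / 2 ^ i" by auto
    have "4 * a / 2 ^ i \<le> 4 * a" using assms by (simp add: divide_le_eq)
    then show "x \<in> {0<..<8 * a}" using x assms by auto
  qed
next
  fix x y assume "x \<in> range (\<lambda>i::nat. 4 * a / 2 ^ i)" "y \<in> range (\<lambda>i::nat. 4 * a / 2 ^ i)" "x < y"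
  then obtain i j where x: "x = 4 * a / 2 ^ i" and y: "y = 4 * a / 2 ^ j" and "x < y" by auto
  have "j < i"
  proof (rule ccontr)
    assume "\<not> j < i"
    then have "(2::real) ^ i \<le> 2 ^ j" by simp
    then have "y \<le> x" using assms x y by (simp add: frac_le)
    then show False using \<open>x < y\<close> by simp
  qed
  then have "(2::real) ^ Suc j \<le> 2 ^ i" by (intro power_increasing) auto
  then have "4 * a / 2 ^ i \<le> 4 * a / 2 ^ Suc j" using assms by (intro divide_left_mono) auto
  then show "2 * x \<le> y" using x y by simp
qed

lemma f_tent_halving_orbit_sums:
  assumes "0 < a"
  shows "(\<lambda>i::nat. f_tent a (4 * a / 2 ^ i)) sums (24 * a)"
proof -
  define g :: "nat \<Rightarrow> real" where "g = (\<lambda>i. f_tent a (4 * a / 2 ^ i))"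
  have tail: "g (Suc (Suc n)) = 7 * a * (1 / 2) ^ n" for n
  proof -
    have "4 * a / 2 ^ Suc (Suc n) \<le> a" using assms by (simp add: divide_le_eq)
    then show ?thesis by (simp add: g_def f_tent_def power_divide)
  qed
  have "(\<lambda>n. 7 * a * (1 / 2 :: real) ^ n) sums (14 * a)"
    using sums_mult[OF geometric_sums[of "1 / 2 :: real"], of "7 * a"] by simp
  then have "(\<lambda>n. g (Suc (Suc n))) sums (14 * a)"
    by (simp only: tail)
  then have "(\<lambda>n. g (Suc n)) sums (14 * a + g 1)"
    by (subst (asm) sums_Suc_iff) simp
  then have "g sums (14 * a + g 1 + g 0)"
    by (subst (asm) sums_Suc_iff)
  moreover have "g 0 = 4 * a" "g 1 = 6 * a"
    using assms by (simp_all add: g_def f_tent_def)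
  ultimately have "g sums (24 * a)" by simp
  then show ?thesis by (simp only: g_def)
qed

lemma objective_halving_orbit:
  assumes "0 < a"
  shows "objective a (range (\<lambda>i::nat. 4 * a / 2 ^ i)) = ennreal (24 * a)"
proof -
  have "inj (\<lambda>i::nat. 4 * a / 2 ^ i)"
    using assms by (auto simp: inj_def divide_cancel_left)
  then have "objective a (range (\<lambda>i::nat. 4 * a / 2 ^ i)) = (\<Sum>\<^sub>\<infinity>i. ennreal (f_tent a (4 * a / 2 ^ i)))"
    unfolding objective_def by (simp add: infsum_reindex comp_def)
  also have "\<dots> = ennreal (24 * a)"
    using assms by (intro infsum_ennreal_eq_if_sums f_tent_halving_orbit_sums f_tent_nonneg) auto
  finally show ?thesis .
qed

theorem mainTheorem9:
  fixes a :: real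
  assumes "a > 0"
  shows "(SUP U \<in> {U. admissible a U}. objective a U) = ennreal (24 * a)
         \<and> admissible a (range (\<lambda>i::nat. 4 * a / 2 ^ i))
         \<and> objective a (range (\<lambda>i::nat. 4 * a / 2 ^ i)) = ennreal (24 * a)"
proof (intro conjI antisym)
  show "(SUP U \<in> {U. admissible a U}. objective a U) \<le> ennreal (24 * a)"
    using objective_le_if_admissible[OF assms] by (auto intro: SUP_least)
  show "ennreal (24 * a) \<le> (SUP U \<in> {U. admissible a U}. objective a U)"
    using admissible_halving_orbit[OF assms] objective_halving_orbit[OF assms]
    by (metis SUP_upper mem_Collect_eq)
qed (use admissible_halving_orbit objective_halving_orbit assms in auto)

end
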